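(* Let $K$ be a commutative field whose characteristic is not equal to two, and let $G=T(2,K)$ be the group of invertible upper triangular matrices $\begin{bmatrix}\alpha & t\\ 0&\beta\end{bmatrix}$ with $\alpha,\beta\in K^*$, $t\in K$. Then for every real Banach space $E$, Jensen's functional equation $f(xy)+f(xy^{-1})=2f(x)$ is stable for the pair $(G;E)$: for every function $f\colon G\to E$ for which there is $c>0$ with $\|f(xy)+f(xy^{-1})-2f(x)\|\le c$ for all $x,y\in G$, there exists $j\colon G\to E$ with $j(xy)+j(xy^{-1})=2j(x)$ for all $x,y\in G$ such that $j-f$ is bounded on $G$.
   Context: $K^*$ denotes the multiplicative group of nonzero elements of $K$. *)

theory Defs
  imports "HOL-Analysis.Analysis"
begin

text \<open>The group T(2,K) of invertible upper triangular 2x2 matrices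
  [[a, t], [0, b]] over a field K, represented by triples (a, t, b)
  with a, b nonzero.  Multiplication and inversion are matrix
  multiplication and matrix inversion written out componentwise.\<close>

definition T2 :: "('k::field \<times> 'k \<times> 'k) set" where
  "T2 = {(a, t, b). a \<noteq> 0 \<and> b \<noteq> 0}"

fun T2_mult :: "'k::field \<times> 'k \<times> 'k \<Rightarrow> 'k \<times> 'k \<times> 'k \<Rightarrow> 'k \<times> 'k \<times> 'k" where
  "T2_mult (a, t, b) (a', t', b') = (a * a', a * t' + t * b', b * b')"

fun T2_inv :: "'k::field \<times> 'k \<times> 'k \<Rightarrow> 'k \<times> 'k \<times> 'k" where
  "T2_inv (a, t, b) = (inverse a, - t / (a * b), inverse b)"

end

theory Submission imports Defs begin

text \<open>Taking \<open>x = 1\<close> in the Jensen inequality shows \<open>f y + f (y\<inverse>) \<approx> 2 f 1\<close>. Combining this with a few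
  further instances, \<open>f (a, t, b)\<close> is within \<open>7c/2\<close> of its value at the diagonal part \<open>(a, 0, b)\<close>, and
  \<open>f - f 1\<close> is \<open>3c/2\<close>-approximately additive on the abelian diagonal subgroup. Hyers' doubling
  construction turns it into an additive \<open>A\<close> on the diagonal, and \<open>j = A \<circ> diag + f 1\<close> solves
  Jensen's equation because \<open>diag\<close> is a homomorphism and \<open>A (y\<inverse>) = - A y\<close>.\<close>

lemma geometric_steps_LIMSEQ:
  fixes X :: "nat \<Rightarrow> 'e::banach"
  assumes steps: "\<And>n. norm (X (Suc n) - X n) \<le> \<delta> / 2 ^ Suc n"
  obtains L where "X \<longlonglongrightarrow> L" and "norm (L - X 0) \<le> \<delta>"
proof -
  define d where "d k = X (Suc k) - X k" for k
  have geometric: "(\<lambda>k. \<delta> / 2 ^ Suc k) sums \<delta>"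
    using sums_mult[OF geometric_sums[of "1/2 :: real"], of "\<delta>/2"]
    by (simp add: power_divide field_simps)
  have norm_summable: "summable (\<lambda>k. norm (d k))"
    using steps by (intro summable_comparison_test[OF _ sums_summable[OF geometric]]) (simp add: d_def)
  have "(\<lambda>n. \<Sum>k<n. d k) \<longlonglongrightarrow> suminf d"
    using summable_LIMSEQ summable_norm_cancel[OF norm_summable] by blast
  then have "(\<lambda>n. X n - X 0) \<longlonglongrightarrow> suminf d"
    by (simp add: d_def sum_lessThan_telescope)
  then have "X \<longlonglongrightarrow> X 0 + suminf d"
    using tendsto_add[OF tendsto_const[of "X 0"]] by fastforce
  moreover have "norm (suminf d) \<le> \<delta>"
  proof -
    have "norm (suminf d) \<le> (\<Sum>k. norm (d k))" by (rule summable_norm[OF norm_summable])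
    also have "\<dots> \<le> (\<Sum>k. \<delta> / 2 ^ Suc k)"
      using norm_summable sums_summable[OF geometric] steps by (intro suminf_le) (simp_all add: d_def)
    also have "\<dots> = \<delta>" using geometric sums_unique by metis
    finally show ?thesis .
  qed
  ultimately show ?thesis using that by simp
qed

lemma doubling_sequence_limit:
  fixes h :: "'a \<Rightarrow> 'e::banach"
  assumes closed: "\<And>x. x \<in> S \<Longrightarrow> sq x \<in> S"
    and approx: "\<And>x. x \<in> S \<Longrightarrow> norm (h (sq x) - 2 *\<^sub>R h x) \<le> \<delta>"
    and "x \<in> S"
  obtains L where "(\<lambda>n. (1 / 2 ^ n) *\<^sub>R h ((sq ^^ n) x)) \<longlonglongrightarrow> L" and "norm (L - h x) \<le> \<delta>"
proof -
  define X where "X = (\<lambda>n. (1 / 2 ^ n) *\<^sub>R h ((sq ^^ n) x))"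
  have "norm (X (Suc n) - X n) \<le> \<delta> / 2 ^ Suc n" for n
  proof -
    have "(sq ^^ n) x \<in> S"
      using \<open>x \<in> S\<close> by (induction n) (simp_all add: closed)
    then have "norm ((1 / 2 ^ Suc n) *\<^sub>R (h (sq ((sq ^^ n) x)) - 2 *\<^sub>R h ((sq ^^ n) x))) \<le> \<delta> / 2 ^ Suc n"
      using approx by (simp add: divide_right_mono)
    then show ?thesis by (simp add: X_def algebra_simps)
  qed
  then obtain L where "X \<longlonglongrightarrow> L" "norm (L - X 0) \<le> \<delta>"
    by (rule geometric_steps_LIMSEQ)
  with that show ?thesis unfolding X_def by simp
qed

lemma funpow_square_mult:
  fixes mult :: "'a \<Rightarrow> 'a \<Rightarrow> 'a"
  assumes closed: "\<And>x y. x \<in> S \<Longrightarrow> y \<in> S \<Longrightarrow> mult x y \<in> S"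
    and assoc: "\<And>x y z. x \<in> S \<Longrightarrow> y \<in> S \<Longrightarrow> z \<in> S \<Longrightarrow> mult (mult x y) z = mult x (mult y z)"
    and commute: "\<And>x y. x \<in> S \<Longrightarrow> y \<in> S \<Longrightarrow> mult x y = mult y x"
    and "x \<in> S" "y \<in> S"
  shows "((\<lambda>z. mult z z) ^^ n) (mult x y) = mult (((\<lambda>z. mult z z) ^^ n) x) (((\<lambda>z. mult z z) ^^ n) y)"
proof -
  have medial: "mult (mult u v) (mult u v) = mult (mult u u) (mult v v)" if "u \<in> S" "v \<in> S" for u v
  proof -
    have "mult v (mult u v) = mult u (mult v v)"
      using that by (metis assoc commute closed)
    then show ?thesis
      using that by (simp add: assoc closed)
  qed
  have iterate_closed: "((\<lambda>z. mult z z) ^^ n) u \<in> S" if "u \<in> S" for u n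
    using that by (induction n) (simp_all add: closed)
  show ?thesis
    by (induction n) (simp_all add: medial iterate_closed assms(4,5))
qed

lemma hyers_additive_approximation:
  fixes h :: "'a \<Rightarrow> 'e::banach" and mult :: "'a \<Rightarrow> 'a \<Rightarrow> 'a"
  assumes closed: "\<And>x y. x \<in> S \<Longrightarrow> y \<in> S \<Longrightarrow> mult x y \<in> S"
    and assoc: "\<And>x y z. x \<in> S \<Longrightarrow> y \<in> S \<Longrightarrow> z \<in> S \<Longrightarrow> mult (mult x y) z = mult x (mult y z)"
    and commute: "\<And>x y. x \<in> S \<Longrightarrow> y \<in> S \<Longrightarrow> mult x y = mult y x"
    and approx: "\<And>x y. x \<in> S \<Longrightarrow> y \<in> S \<Longrightarrow> norm (h (mult x y) - h x - h y) \<le> \<delta>"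
  obtains A where "\<And>x y. x \<in> S \<Longrightarrow> y \<in> S \<Longrightarrow> A (mult x y) = A x + A y"
    and "\<And>x. x \<in> S \<Longrightarrow> norm (A x - h x) \<le> \<delta>"
proof -
  define sq where "sq = (\<lambda>x. mult x x)"
  define X where "X x n = (1 / 2 ^ n) *\<^sub>R h ((sq ^^ n) x)" for x n
  have sq_closed: "sq x \<in> S" if "x \<in> S" for x
    using that by (simp add: sq_def closed)
  have sq_pow_closed: "(sq ^^ n) x \<in> S" if "x \<in> S" for x n
    using that by (induction n) (simp_all add: sq_closed)
  have sq_pow_mult: "(sq ^^ n) (mult x y) = mult ((sq ^^ n) x) ((sq ^^ n) y)"
    if "x \<in> S" "y \<in> S" for x y n
    unfolding sq_def by (rule funpow_square_mult[OF closed assoc commute that])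
  have sq_approx: "norm (h (sq x) - 2 *\<^sub>R h x) \<le> \<delta>" if "x \<in> S" for x
    using approx[OF that that] by (simp add: sq_def scaleR_2 diff_diff_eq)
  define A where "A x = lim (X x)" for x
  have A_limit: "X x \<longlonglongrightarrow> A x" and A_near: "norm (A x - h x) \<le> \<delta>" if x: "x \<in> S" for x
  proof -
    obtain L where "X x \<longlonglongrightarrow> L" "norm (L - h x) \<le> \<delta>"
      unfolding X_def by (rule doubling_sequence_limit[of S sq h \<delta> x, OF sq_closed sq_approx x])
    moreover from this have "A x = L" by (simp add: A_def limI)
    ultimately show "X x \<longlonglongrightarrow> A x" "norm (A x - h x) \<le> \<delta>" by simp_all
  qed
  have "A (mult x y) = A x + A y" if "x \<in> S" "y \<in> S" for x y
  proof -
    have "(\<lambda>n. X (mult x y) n - X x n - X y n) \<longlonglongrightarrow> A (mult x y) - A x - A y"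
      using A_limit that closed by (intro tendsto_diff) auto
    moreover have "(\<lambda>n. X (mult x y) n - X x n - X y n) \<longlonglongrightarrow> 0"
    proof (rule Lim_null_comparison)
      show "(\<lambda>n. \<delta> / 2 ^ n) \<longlonglongrightarrow> 0"
        by (intro LIMSEQ_divide_realpow_zero) simp
      have "X (mult x y) n - X x n - X y n
          = (1 / 2 ^ n) *\<^sub>R (h (mult ((sq ^^ n) x) ((sq ^^ n) y)) - h ((sq ^^ n) x) - h ((sq ^^ n) y))" for n
        by (simp add: X_def sq_pow_mult that algebra_simps)
      then show "\<forall>\<^sub>F n in sequentially. norm (X (mult x y) n - X x n - X y n) \<le> \<delta> / 2 ^ n"
        using approx[OF sq_pow_closed sq_pow_closed] that by (simp add: divide_right_mono)
    qed
    ultimately have "A (mult x y) - A x - A y = 0" by (rule LIMSEQ_unique)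
    then show ?thesis by (simp add: algebra_simps)
  qed
  with A_near that show ?thesis by blast
qed

lemma norm_triangle_mono_diff:
  "norm a \<le> r \<Longrightarrow> norm b \<le> s \<Longrightarrow> norm (a - b) \<le> r + s"
  by (metis add_mono norm_triangle_ineq4 order_trans)

fun T2_diag :: "'k::field \<times> 'k \<times> 'k \<Rightarrow> 'k \<times> 'k \<times> 'k" where
  "T2_diag (a, t, b) = (a, 0, b)"

lemma T2_mult_closed: "x \<in> T2 \<Longrightarrow> y \<in> T2 \<Longrightarrow> T2_mult x y \<in> T2"
  by (cases x; cases y) (simp add: T2_def)

lemma T2_inv_closed: "x \<in> T2 \<Longrightarrow> T2_inv x \<in> T2"
  by (cases x) (simp add: T2_def)

lemma T2_mult_assoc: "T2_mult (T2_mult x y) z = T2_mult x (T2_mult y z)"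
  by (cases x; cases y; cases z) (simp add: algebra_simps)

lemma T2_mult_inv: "x \<in> T2 \<Longrightarrow> T2_mult x (T2_inv x) = (1, 0, 1)"
  by (cases x) (simp add: T2_def divide_inverse)

lemma T2_diag_mult: "T2_diag (T2_mult x y) = T2_mult (T2_diag x) (T2_diag y)"
  by (cases x; cases y) simp

lemma T2_diag_mult_commute: "T2_mult (T2_diag x) (T2_diag y) = T2_mult (T2_diag y) (T2_diag x)"
  by (cases x; cases y) (simp add: mult.commute)

lemma T2_diag_image_mult_closed:
  assumes "x \<in> T2_diag ` T2" "y \<in> T2_diag ` T2"
  shows "T2_mult x y \<in> T2_diag ` T2"
proof -
  from assms obtain x' y' where "x' \<in> T2" "y' \<in> T2" "x = T2_diag x'" "y = T2_diag y'"
    by blast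
  then have "T2_mult x' y' \<in> T2" "T2_mult x y = T2_diag (T2_mult x' y')"
    by (simp_all only: T2_mult_closed T2_diag_mult)
  then show ?thesis by blast
qed

lemma T2_jensen_of_additive_diag:
  fixes A :: "'k::field \<times> 'k \<times> 'k \<Rightarrow> 'e::real_vector"
  assumes additive: "\<And>x y. x \<in> T2_diag ` T2 \<Longrightarrow> y \<in> T2_diag ` T2 \<Longrightarrow> A (T2_mult x y) = A x + A y"
    and "x \<in> T2" "y \<in> T2"
  shows "(A (T2_diag (T2_mult x y)) + v) + (A (T2_diag (T2_mult x (T2_inv y))) + v)
       = 2 *\<^sub>R (A (T2_diag x) + v)"
proof -
  have in_diag: "T2_diag z \<in> T2_diag ` T2" if "z \<in> T2" for z
    using that by blast
  have "A (1, 0, 1) = A (1, 0, 1) + A (1, 0, 1)"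
    using additive[OF in_diag in_diag, of "(1, 0, 1)" "(1, 0, 1)"] by (simp add: T2_def)
  then have "A (T2_diag y) + A (T2_diag (T2_inv y)) = 0"
    using additive[OF in_diag in_diag, of y "T2_inv y"] \<open>y \<in> T2\<close>
    by (simp add: T2_inv_closed T2_mult_inv flip: T2_diag_mult)
  then show ?thesis
    using additive[OF in_diag in_diag] assms(2,3)
    by (simp add: T2_diag_mult T2_inv_closed scaleR_2 algebra_simps)
qed

locale T2_approx_jensen =
  fixes f :: "'k::field \<times> 'k \<times> 'k \<Rightarrow> 'e::real_normed_vector" and c :: real
  assumes approx: "\<And>x y. x \<in> T2 \<Longrightarrow> y \<in> T2 \<Longrightarrow>
    norm (f (T2_mult x y) + f (T2_mult x (T2_inv y)) - 2 *\<^sub>R f x) \<le> c"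
begin

lemma approx_at:
  "x \<in> T2 \<Longrightarrow> y \<in> T2 \<Longrightarrow> T2_mult x y = p \<Longrightarrow> T2_mult x (T2_inv y) = q \<Longrightarrow>
    norm (f p + f q - 2 *\<^sub>R f x) \<le> c"
  using approx by blast

lemma unipotent_near_one: "norm (f (1, s, 1) - f (1, 0, 1)) \<le> c"
proof -
  have "norm (f (-1, s, 1) + f (-1, s, 1) - 2 *\<^sub>R f (1, 0, 1)) \<le> c"
    by (rule approx_at[of _ "(-1, s, 1)"]) (simp_all add: T2_def)
  moreover have "norm (f (-1, s, 1) + f (-1, s, 1) - 2 *\<^sub>R f (1, s, 1)) \<le> c"
    by (rule approx_at[of _ "(-1, 0, 1)"]) (simp_all add: T2_def)
  ultimately have "norm (2 *\<^sub>R (f (1, s, 1) - f (1, 0, 1))) \<le> c + c"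
    using norm_triangle_mono_diff by (fastforce simp: algebra_simps)
  then show ?thesis by simp
qed

lemma near_diag:
  assumes "x \<in> T2"
  shows "norm (f x - f (T2_diag x)) \<le> 7 / 2 * c"
proof -
  obtain a t b where x: "x = (a, t, b)" and nz: "a \<noteq> 0" "b \<noteq> 0"
    using assms by (cases x) (auto simp: T2_def)
  define q where "q = (inverse a * inverse a, - t / (a * a * b), inverse b * inverse b)"
  define W1 where "W1 = f (1, t / b, 1) + f (a * a, t * b, b * b) - 2 *\<^sub>R f (a, t, b)"
  define W2 where "W2 = f (1, t / a, 1) + f q - 2 *\<^sub>R f (inverse a, 0, inverse b)"
  define W3 where "W3 = f (a * a, t * b, b * b) + f q - 2 *\<^sub>R f (1, 0, 1)"
  define W4 where "W4 = f (a, 0, b) + f (inverse a, 0, inverse b) - 2 *\<^sub>R f (1, 0, 1)"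
  define U1 where "U1 = f (1, t / b, 1) - f (1, 0, 1)"
  define U2 where "U2 = f (1, t / a, 1) - f (1, 0, 1)"
  have "norm W1 \<le> c" unfolding W1_def
    by (rule approx_at[of _ "(inverse a, 0, inverse b)"]) (simp_all add: T2_def nz divide_inverse)
  moreover have "norm W2 \<le> c" unfolding W2_def
    by (rule approx_at[of _ "(a, t, b)"]) (simp_all add: T2_def nz q_def field_simps)
  moreover have "norm W3 \<le> c" unfolding W3_def
    by (rule approx_at[of _ "(a * a, t * b, b * b)"]) (simp_all add: T2_def nz q_def field_simps)
  moreover have "norm W4 \<le> c" unfolding W4_def
    by (rule approx_at[of _ "(a, 0, b)"]) (simp_all add: T2_def nz)
  moreover have "norm U1 \<le> c" "norm U2 \<le> c"
    unfolding U1_def U2_def by (rule unipotent_near_one)+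
  ultimately have "norm (W1 + W2 - W3 - U1 - U2 + 2 *\<^sub>R W4) \<le> c + c + c + c + c + 2 * c"
    by (intro norm_triangle_mono norm_triangle_mono_diff) auto
  moreover have "W1 + W2 - W3 - U1 - U2 + 2 *\<^sub>R W4 = 2 *\<^sub>R (f (a, 0, b) - f (a, t, b))"
    unfolding W1_def W2_def W3_def W4_def U1_def U2_def scaleR_2 by (simp add: algebra_simps)
  ultimately show ?thesis by (simp add: x norm_minus_commute)
qed

lemma diag_approx_additive:
  assumes "x \<in> T2_diag ` T2" "y \<in> T2_diag ` T2"
  shows "norm (f (T2_mult x y) - f x - f y + f (1, 0, 1)) \<le> 3 / 2 * c"
proof -
  obtain a b a' b' where xy: "x = (a, 0, b)" "y = (a', 0, b')"
    and nz: "a \<noteq> 0" "b \<noteq> 0" "a' \<noteq> 0" "b' \<noteq> 0"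
    using assms by (auto simp: T2_def)
  define Z1 where "Z1 = f (a * a', 0, b * b') + f (a / a', 0, b / b') - 2 *\<^sub>R f (a, 0, b)"
  define Z2 where "Z2 = f (a * a', 0, b * b') + f (a' / a, 0, b' / b) - 2 *\<^sub>R f (a', 0, b')"
  define Z3 where "Z3 = f (a / a', 0, b / b') + f (a' / a, 0, b' / b) - 2 *\<^sub>R f (1, 0, 1)"
  have "norm Z1 \<le> c" unfolding Z1_def
    by (rule approx_at[of _ "(a', 0, b')"]) (simp_all add: T2_def nz divide_inverse)
  moreover have "norm Z2 \<le> c" unfolding Z2_def
    by (rule approx_at[of _ "(a, 0, b)"]) (simp_all add: T2_def nz divide_inverse mult.commute)
  moreover have "norm Z3 \<le> c" unfolding Z3_def
    by (rule approx_at[of _ "(a / a', 0, b / b')"]) (simp_all add: T2_def nz)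
  ultimately have "norm (Z1 + Z2 - Z3) \<le> c + c + c"
    by (intro norm_triangle_mono norm_triangle_mono_diff)
  moreover have "Z1 + Z2 - Z3 = 2 *\<^sub>R (f (a * a', 0, b * b') - f (a, 0, b) - f (a', 0, b') + f (1, 0, 1))"
    unfolding Z1_def Z2_def Z3_def scaleR_2 by (simp add: algebra_simps)
  ultimately show ?thesis by (simp add: xy)
qed

end

lemma T2_approx_jensen_diag_additive:
  fixes f :: "'k::field \<times> 'k \<times> 'k \<Rightarrow> 'e::banach"
  assumes "T2_approx_jensen f c"
  obtains A where "\<And>x y. x \<in> T2_diag ` T2 \<Longrightarrow> y \<in> T2_diag ` T2 \<Longrightarrow> A (T2_mult x y) = A x + A y"
    and "\<And>x. x \<in> T2_diag ` T2 \<Longrightarrow> norm (A x - (f x - f (1, 0, 1))) \<le> 3 / 2 * c"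
proof (rule hyers_additive_approximation[where S = "T2_diag ` T2" and mult = T2_mult
      and h = "\<lambda>x. f x - f (1, 0, 1)" and \<delta> = "3 / 2 * c"])
  interpret T2_approx_jensen f c by fact
  show "T2_mult x y \<in> T2_diag ` T2" if "x \<in> T2_diag ` T2" "y \<in> T2_diag ` T2" for x y
    using that by (rule T2_diag_image_mult_closed)
  show "T2_mult x y = T2_mult y x" if "x \<in> T2_diag ` T2" "y \<in> T2_diag ` T2" for x y
    using that by (elim imageE) (simp add: T2_diag_mult_commute)
  show "norm (f (T2_mult x y) - f (1, 0, 1) - (f x - f (1, 0, 1)) - (f y - f (1, 0, 1))) \<le> 3 / 2 * c"
    if "x \<in> T2_diag ` T2" "y \<in> T2_diag ` T2" for x y
    using diag_approx_additive[OF that] by (simp add: algebra_simps)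
qed (rule T2_mult_assoc, rule that)

theorem theorem3p14:
  fixes f :: "'k::field \<times> 'k \<times> 'k \<Rightarrow> 'e::banach" and c :: real
  assumes char_not_2: "(2::'k) \<noteq> 0"
    and c_pos: "c > 0"
    and approx: "\<forall>x\<in>T2. \<forall>y\<in>T2.
        norm (f (T2_mult x y) + f (T2_mult x (T2_inv y)) - 2 *\<^sub>R f x) \<le> c"
  shows "\<exists>j :: 'k \<times> 'k \<times> 'k \<Rightarrow> 'e.
           (\<forall>x\<in>T2. \<forall>y\<in>T2. j (T2_mult x y) + j (T2_mult x (T2_inv y)) = 2 *\<^sub>R j x)
         \<and> (\<exists>B. \<forall>x\<in>T2. norm (j x - f x) \<le> B)"
proof -
  interpret T2_approx_jensen f c
    using approx by unfold_locales blast
  obtain A where additive: "\<And>x y. x \<in> T2_diag ` T2 \<Longrightarrow> y \<in> T2_diag ` T2 \<Longrightarrow>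
      A (T2_mult x y) = A x + A y"
    and near: "\<And>x. x \<in> T2_diag ` T2 \<Longrightarrow> norm (A x - (f x - f (1, 0, 1))) \<le> 3 / 2 * c"
    using T2_approx_jensen_diag_additive[OF T2_approx_jensen_axioms] by blast
  define j where "j x = A (T2_diag x) + f (1, 0, 1)" for x
  have "norm (j x - f x) \<le> 3 / 2 * c + 7 / 2 * c" if "x \<in> T2" for x
  proof -
    have "j x - f x = (A (T2_diag x) - (f (T2_diag x) - f (1, 0, 1))) - (f x - f (T2_diag x))"
      by (simp add: j_def)
    then show ?thesis
      using near[of "T2_diag x"] near_diag[OF that] that by (metis norm_triangle_mono_diff imageI)
  qed
  moreover have "\<forall>x\<in>T2. \<forall>y\<in>T2. j (T2_mult x y) + j (T2_mult x (T2_inv y)) = 2 *\<^sub>R j x"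
    unfolding j_def using T2_jensen_of_additive_diag[OF additive] by blast
  ultimately show ?thesis by blast
qed

end
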